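(* The matrix $U_3=\frac{1}{\sqrt3}\left(I_2^{\otimes 3}+i\,\sigma_1^{\otimes 3}+i\,\sigma_3^{\otimes 3}\right)$ on $\mathbb{C}^2\otimes\mathbb{C}^2\otimes\mathbb{C}^2$ is unitary and $\mathrm{sr}(U_3)=3$.
   Context: $I_2$ is the $2\times2$ identity, $\sigma_1=\begin{bmatrix}0&1\\1&0\end{bmatrix}$, $\sigma_3=\begin{bmatrix}1&0\\0&-1\end{bmatrix}$. For a matrix $U$ on $\mathbb{C}^2\otimes\mathbb{C}^2\otimes\mathbb{C}^2$ (systems $A,B,C$), its Schmidt rank $\mathrm{sr}(U)$ is the least integer $r$ such that $U=\sum_{j=1}^r A_j\otimes B_j\otimes C_j$ with $A_j,B_j,C_j$ complex $2\times 2$ matrices (i.e. the tensor rank of $U$). *)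

theory Defs
  imports "HOL-Analysis.Analysis"
begin

type_synonym mat2 = "complex^2^2"
type_synonym idx3 = "2 \<times> 2 \<times> 2"
type_synonym mat8 = "complex^idx3^idx3"

definition Id2 :: mat2 where
  "Id2 = (\<chi> i j. if i = j then 1 else 0)"

definition sigma1 :: mat2 where
  "sigma1 = (\<chi> i j. if i = j then 0 else 1)"

definition sigma3 :: mat2 where
  "sigma3 = (\<chi> i j. if i = j then (if i = 0 then 1 else -1) else 0)"

definition kron3 :: "mat2 \<Rightarrow> mat2 \<Rightarrow> mat2 \<Rightarrow> mat8" where
  "kron3 A B C = (\<chi> i j. case i of (i1,i2,i3) \<Rightarrow> case j of (j1,j2,j3) \<Rightarrow>
      A $ i1 $ j1 * B $ i2 $ j2 * C $ i3 $ j3)"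

definition adjoint8 :: "mat8 \<Rightarrow> mat8" where
  "adjoint8 U = (\<chi> i j. cnj (U $ j $ i))"

definition unitary8 :: "mat8 \<Rightarrow> bool" where
  "unitary8 U \<longleftrightarrow> U ** adjoint8 U = mat 1 \<and> adjoint8 U ** U = mat 1"

definition schmidt_rank :: "mat8 \<Rightarrow> nat" where
  "schmidt_rank U = (LEAST r. \<exists>A B C :: nat \<Rightarrow> mat2.
      U = (\<Sum>j<r. kron3 (A j) (B j) (C j)))"

definition U3 :: mat8 where
  "U3 = (\<chi> i j. (kron3 Id2 Id2 Id2 $ i $ j + \<i> * kron3 sigma1 sigma1 sigma1 $ i $ j
                 + \<i> * kron3 sigma3 sigma3 sigma3 $ i $ j) / complex_of_real (sqrt 3))"

end

theory Submission
  imports Defs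
begin

text \<open>Write X = \<sigma>1 \<otimes> \<sigma>1 \<otimes> \<sigma>1 and Z = \<sigma>3 \<otimes> \<sigma>3 \<otimes> \<sigma>3. They are hermitian involutions, and they
  anticommute because \<sigma>1 and \<sigma>3 do and there is an odd number of tensor factors; hence
  U3 = (1 + \<i>X + \<i>Z)/\<surd>3 is unitary. Its definition exhibits three product terms. Conversely, a
  sum of r product operators A j \<otimes> B j \<otimes> C j has rank at most r as a matrix from system A to
  systems BC, so for r \<le> 2 all 3\<times>3 minors of this flattening vanish, whereas U3 has such a minor
  equal to -4/\<surd>27.\<close>

definition scale_matrix :: "'a::times \<Rightarrow> 'a^'n^'m \<Rightarrow> 'a^'n^'m" where
  "scale_matrix c A = (\<chi> i j. c * A $ i $ j)"

lemma scale_matrix_component [simp]: "scale_matrix c A $ i $ j = c * A $ i $ j"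
  by (simp add: scale_matrix_def)

lemma scale_matrix_mult_left:
  fixes A :: "'a::comm_semiring_1^'n^'m"
  shows "scale_matrix c A ** B = scale_matrix c (A ** B)"
  by (simp add: vec_eq_iff matrix_matrix_mult_def sum_distrib_left mult.assoc)

lemma scale_matrix_mult_right:
  fixes A :: "'a::comm_semiring_1^'n^'m"
  shows "A ** scale_matrix c B = scale_matrix c (A ** B)"
  by (simp add: vec_eq_iff matrix_matrix_mult_def sum_distrib_left mult.left_commute)

lemma scale_matrix_add: "scale_matrix c (A + B) = scale_matrix c A + scale_matrix (c::'a::semiring) B"
  by (simp add: vec_eq_iff distrib_left)

lemma scale_matrix_scale_matrix:
  "scale_matrix c (scale_matrix d A) = scale_matrix (c * d) (A :: 'a::semigroup_mult^'n^'m)"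
  by (simp add: vec_eq_iff mult.assoc)

lemma scale_matrix_mat: "scale_matrix c (mat d) = mat (c * d :: 'a::mult_zero)"
  by (simp add: vec_eq_iff mat_def)

lemma matrix_add_rdistrib: "(A + B) ** C = A ** C + B ** C"
  by (simp add: vec_eq_iff matrix_matrix_mult_def sum.distrib distrib_right)

lemma all_idx3: "(\<forall>i :: idx3. P i) \<longleftrightarrow> (\<forall>a b c. P (a, b, c))"
  by auto

lemma sum_UNIV_idx3:
  "sum f (UNIV :: idx3 set) = (\<Sum>a\<in>UNIV. \<Sum>b\<in>UNIV. \<Sum>c\<in>UNIV. f (a, b, c))"
  by (simp add: UNIV_Times_UNIV[symmetric] sum.cartesian_product del: UNIV_Times_UNIV)

lemma kron3_component [simp]:
  "kron3 A B C $ (i1, i2, i3) $ (j1, j2, j3) = A $ i1 $ j1 * B $ i2 $ j2 * C $ i3 $ j3"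
  by (simp add: kron3_def)

lemma kron3_mult: "kron3 A B C ** kron3 A' B' C' = kron3 (A ** A') (B ** B') (C ** C')"
proof -
  have "(kron3 A B C ** kron3 A' B' C') $ (i1, i2, i3) $ (j1, j2, j3)
      = (A ** A') $ i1 $ j1 * ((B ** B') $ i2 $ j2 * (C ** C') $ i3 $ j3)" for i1 i2 i3 j1 j2 j3
  proof -
    have "(kron3 A B C ** kron3 A' B' C') $ (i1, i2, i3) $ (j1, j2, j3)
        = (\<Sum>a\<in>UNIV. \<Sum>b\<in>UNIV. \<Sum>c\<in>UNIV.
             A $ i1 $ a * A' $ a $ j1 * (B $ i2 $ b * B' $ b $ j2 * (C $ i3 $ c * C' $ c $ j3)))"
      by (simp add: matrix_matrix_mult_def sum_UNIV_idx3 mult_ac)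
    also have "\<dots> = (A ** A') $ i1 $ j1 * ((B ** B') $ i2 $ j2 * (C ** C') $ i3 $ j3)"
      unfolding matrix_matrix_mult_def vec_lambda_beta
      by (simp only: sum_distrib_right, simp only: sum_distrib_left)
    finally show ?thesis .
  qed
  then show ?thesis
    by (simp add: vec_eq_iff all_idx3 mult.assoc)
qed

lemma kron3_mat_1: "kron3 (mat 1) (mat 1) (mat 1) = mat 1"
  by (simp add: vec_eq_iff all_idx3 mat_def)

lemma kron3_uminus: "kron3 (- A) (- B) (- C) = - kron3 A B C"
  by (simp add: vec_eq_iff all_idx3)

lemma kron3_scale_matrix_left: "kron3 (scale_matrix c A) B C = scale_matrix c (kron3 A B C)"
  by (simp add: vec_eq_iff all_idx3 mult.assoc)

definition hermitian2 :: "mat2 \<Rightarrow> bool" where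
  "hermitian2 A \<longleftrightarrow> (\<forall>i j. cnj (A $ j $ i) = A $ i $ j)"

lemma adjoint8_kron3:
  assumes "hermitian2 A" "hermitian2 B" "hermitian2 C"
  shows "adjoint8 (kron3 A B C) = kron3 A B C"
  using assms by (simp add: vec_eq_iff all_idx3 adjoint8_def hermitian2_def)

lemma adjoint8_add: "adjoint8 (U + V) = adjoint8 U + adjoint8 V"
  by (simp add: vec_eq_iff adjoint8_def)

lemma adjoint8_scale_matrix: "adjoint8 (scale_matrix c U) = scale_matrix (cnj c) (adjoint8 U)"
  by (simp add: vec_eq_iff adjoint8_def)

lemma adjoint8_mat: "adjoint8 (mat c) = mat (cnj c)"
  by (simp add: vec_eq_iff adjoint8_def mat_def)

text \<open>Since X and Z anticommute, the cross terms cancel in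
  (1 + \<i>X + \<i>Z)(1 - \<i>X - \<i>Z) = 1 + XX + ZZ + (XZ + ZX) = 3.\<close>
lemma unitary8_clifford:
  assumes XX: "X ** X = mat 1" and ZZ: "Z ** Z = mat 1" and anti: "Z ** X = - (X ** Z)"
    and herm: "adjoint8 X = X" "adjoint8 Z = Z"
  shows "unitary8 (scale_matrix (1 / complex_of_real (sqrt 3))
                    (mat 1 + scale_matrix \<i> X + scale_matrix \<i> Z))"
proof -
  define s where "s = 1 / complex_of_real (sqrt 3)"
  have s2: "s * (s * 3) = 1"
    by (simp add: s_def flip: of_real_mult)
  define W where "W = mat 1 + scale_matrix \<i> X + scale_matrix \<i> Z"
  define W' where "W' = mat 1 + scale_matrix (- \<i>) X + scale_matrix (- \<i>) Z"
  have adj: "adjoint8 (scale_matrix s W) = scale_matrix s W'"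
    by (simp add: W_def W'_def s_def adjoint8_add adjoint8_scale_matrix adjoint8_mat herm)
  have "W ** W' = mat 3" "W' ** W = mat 3"
    by (simp_all add: W_def W'_def matrix_add_ldistrib matrix_add_rdistrib scale_matrix_mult_left
        scale_matrix_mult_right scale_matrix_scale_matrix XX ZZ anti,
        simp_all add: vec_eq_iff mat_def algebra_simps)
  then have "scale_matrix s W ** scale_matrix s W' = mat 1"
    "scale_matrix s W' ** scale_matrix s W = mat 1"
    by (simp_all add: scale_matrix_mult_left scale_matrix_mult_right scale_matrix_scale_matrix
        scale_matrix_mat s2)
  then show ?thesis
    unfolding unitary8_def s_def[symmetric] W_def[symmetric] adj by blast
qed

lemma Id2_eq_mat_1: "Id2 = mat 1"
  by (simp add: Id2_def mat_def)

lemma sigma1_mult_sigma1: "sigma1 ** sigma1 = mat 1"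
  and sigma3_mult_sigma3: "sigma3 ** sigma3 = mat 1"
  and sigma3_mult_sigma1: "sigma3 ** sigma1 = - (sigma1 ** sigma3)"
  by (simp_all add: vec_eq_iff forall_2 matrix_matrix_mult_def sum_2 mat_def sigma1_def sigma3_def)

lemma hermitian2_sigma1: "hermitian2 sigma1"
  and hermitian2_sigma3: "hermitian2 sigma3"
  by (auto simp: hermitian2_def sigma1_def sigma3_def)

lemma U3_eq:
  "U3 = scale_matrix (1 / complex_of_real (sqrt 3))
          (kron3 Id2 Id2 Id2 + scale_matrix \<i> (kron3 sigma1 sigma1 sigma1)
             + scale_matrix \<i> (kron3 sigma3 sigma3 sigma3))"
  by (simp add: vec_eq_iff U3_def)

lemma unitary8_U3: "unitary8 U3"
  unfolding U3_eq Id2_eq_mat_1 kron3_mat_1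
proof (rule unitary8_clifford)
  show "kron3 sigma3 sigma3 sigma3 ** kron3 sigma1 sigma1 sigma1
      = - (kron3 sigma1 sigma1 sigma1 ** kron3 sigma3 sigma3 sigma3)"
    by (simp add: kron3_mult sigma3_mult_sigma1 kron3_uminus)
qed (simp_all add: kron3_mult sigma1_mult_sigma1 sigma3_mult_sigma3 kron3_mat_1
      adjoint8_kron3 hermitian2_sigma1 hermitian2_sigma3)

lemma det_3_sum_rank_one_eq_0:
  fixes a u :: "nat \<Rightarrow> 'a::comm_ring_1^3"
  assumes "r \<le> 2"
  shows "det (\<Sum>j<r. \<chi> k l. a j $ k * u j $ l) = 0"
proof -
  have "r = 0 \<or> r = 1 \<or> r = 2"
    using assms by auto
  then show ?thesis
    by (auto simp: det_3 numeral_2_eq_2 lessThan_Suc algebra_simps)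
qed

text \<open>The 3\<times>3 submatrix of U, viewed as a 4\<times>16 matrix from system A to systems BC,
  with rows \<rho> k = (p1, q1) and columns \<kappa> l = ((p2, p3), (q2, q3)).\<close>
definition flattening_minor ::
    "mat8 \<Rightarrow> (3 \<Rightarrow> 2 \<times> 2) \<Rightarrow> (3 \<Rightarrow> (2 \<times> 2) \<times> (2 \<times> 2)) \<Rightarrow> complex^3^3" where
  "flattening_minor U \<rho> \<kappa> = (\<chi> k l. case (\<rho> k, \<kappa> l) of ((p1, q1), (p2, p3), (q2, q3)) \<Rightarrow>
      U $ (p1, p2, p3) $ (q1, q2, q3))"

lemma flattening_minor_sum:
  "flattening_minor (\<Sum>j<r. M j) \<rho> \<kappa> = (\<Sum>j<r. flattening_minor (M j) \<rho> \<kappa>)"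
  by (simp add: vec_eq_iff flattening_minor_def sum_component split: prod.split)

lemma flattening_minor_kron3:
  "flattening_minor (kron3 A B C) \<rho> \<kappa>
     = (\<chi> k l. (\<chi> k. case \<rho> k of (p1, q1) \<Rightarrow> A $ p1 $ q1) $ k
             * (\<chi> l. case \<kappa> l of ((p2, p3), (q2, q3)) \<Rightarrow> B $ p2 $ q2 * C $ p3 $ q3) $ l)"
  by (simp add: vec_eq_iff flattening_minor_def mult.assoc split: prod.split)

lemma det_flattening_minor_eq_0:
  fixes r :: nat
  assumes "r \<le> 2"
  shows "det (flattening_minor (\<Sum>j<r. kron3 (A j) (B j) (C j)) \<rho> \<kappa>) = 0"
  unfolding flattening_minor_sum flattening_minor_kron3
  by (rule det_3_sum_rank_one_eq_0[OF assms])

lemma det_flattening_minor_U3: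
  "det (flattening_minor U3
          (\<lambda>k. if k = 1 then (0, 0) else if k = 2 then (1, 1) else (0, 1))
          (\<lambda>l. if l = 1 then ((0, 0), (0, 0)) else if l = 2 then ((0, 1), (0, 1)) else ((0, 0), (1, 1))))
     = - 4 / complex_of_real (sqrt 3) ^ 3"
  by (simp add: det_3 flattening_minor_def U3_def Id2_def sigma1_def sigma3_def field_simps power3_eq_cube)

lemma U3_sum_kron3:
  "U3 = (\<Sum>j<3. kron3 ([scale_matrix (1 / complex_of_real (sqrt 3)) Id2,
                          scale_matrix (\<i> / complex_of_real (sqrt 3)) sigma1,
                          scale_matrix (\<i> / complex_of_real (sqrt 3)) sigma3] ! j)
                        ([Id2, sigma1, sigma3] ! j) ([Id2, sigma1, sigma3] ! j))"
  by (simp add: U3_eq numeral_3_eq_3 lessThan_Suc kron3_scale_matrix_left scale_matrix_add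
      scale_matrix_scale_matrix)

lemma U3_ne_sum_kron3:
  fixes r :: nat
  assumes "r \<le> 2"
  shows "U3 \<noteq> (\<Sum>j<r. kron3 (A j) (B j) (C j))"
proof
  assume U3: "U3 = (\<Sum>j<r. kron3 (A j) (B j) (C j))"
  have "det (flattening_minor U3 \<rho> \<kappa>) = 0" for \<rho> \<kappa>
    unfolding U3 by (rule det_flattening_minor_eq_0[OF assms])
  then show False
    using det_flattening_minor_U3 by simp
qed

theorem mainTheorem3:
  shows "unitary8 U3 \<and> schmidt_rank U3 = 3"
proof
  show "unitary8 U3"
    by (rule unitary8_U3)
  show "schmidt_rank U3 = 3"
    unfolding schmidt_rank_def
  proof (rule Least_equality)
    show "\<exists>A B C. U3 = (\<Sum>j<3::nat. kron3 (A j) (B j) (C j))"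
      using U3_sum_kron3 by blast
    show "3 \<le> r" if "\<exists>A B C. U3 = (\<Sum>j<r. kron3 (A j) (B j) (C j))"
      for r :: nat
      using that U3_ne_sum_kron3[of r] by fastforce
  qed
qed

end
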